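(* Let $(M,\bar g)$ be an umbilically synchronized space-time and let $V$ be a conformal vector field on $M$ ($\pounds_V\bar g=2\psi\bar g$ for a smooth function $\psi$) that is tangential to the spatial slices $\Sigma_t$. Then $V$ is Killing if and only if the lapse function $N$ is constant along $V$ (i.e. $V(N)=0$), equivalently, if and only if $V$ is orthogonal to the acceleration vector field $\mathbf A=\bar\nabla_{\mathbf n}\mathbf n$.
   Context: An umbilically synchronized space-time is an $(n+1)$-dimensional Lorentzian manifold $M$ with coordinates $(t,x^1,\dots,x^n)$ and metric $ds^2=-N^2dt^2+g_{ij}dx^idx^j$ (zero shift), lapse $N>0$, such that each spatial slice $\Sigma_t=\{t=\text{const}\}$ is totally umbilical: $K_{ij}=\bar g(\bar\nabla_{\partial_i}\mathbf n,\partial_j)=\tau g_{ij}$, where $\mathbf n=\frac1N\partial_t$ is the unit normal and $\tau$ the mean curvature. The acceleration $\mathbf A=\bar\nabla_{\mathbf n}\mathbf n$ equals the spatial gradient of $\ln N$. *)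

theory Defs
  imports "HOL-Analysis.Analysis"
begin

text \<open>Space-time is modelled as an open coordinate domain U of real^'m
 (coordinates x^a, a :: 'm), with a distinguished index t0 (the time coordinate t);
 the remaining indices are the spatial coordinates x^1..x^n.\<close>

definition pd :: "(real^'m \<Rightarrow> real) \<Rightarrow> 'm \<Rightarrow> real^'m \<Rightarrow> real" where
  "pd f k p = frechet_derivative f (at p) (axis k 1)"

fun iter_pd :: "'m list \<Rightarrow> (real^'m \<Rightarrow> real) \<Rightarrow> real^'m \<Rightarrow> real" where
  "iter_pd [] f = f"
| "iter_pd (k # ks) f = pd (iter_pd ks f) k"

definition smooth_on :: "(real^'m) set \<Rightarrow> (real^'m \<Rightarrow> real) \<Rightarrow> bool" where
  "smooth_on U f \<longleftrightarrow> (\<forall>ks. continuous_on U (iter_pd ks f) \<and>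
                              (\<forall>p\<in>U. iter_pd ks f differentiable (at p)))"

definition gprod :: "(real^'m \<Rightarrow> 'm \<Rightarrow> 'm \<Rightarrow> real) \<Rightarrow> real^'m \<Rightarrow> real^'m \<Rightarrow> real^'m \<Rightarrow> real" where
  "gprod gb p X Y = (\<Sum>a\<in>UNIV. \<Sum>b\<in>UNIV. gb p a b * X$a * Y$b)"

definition ginv :: "(real^'m \<Rightarrow> 'm \<Rightarrow> 'm \<Rightarrow> real) \<Rightarrow> real^'m \<Rightarrow> 'm \<Rightarrow> 'm \<Rightarrow> real" where
  "ginv gb p a b = matrix_inv (\<chi> i j. gb p i j) $ a $ b"

definition christoffel :: "(real^'m \<Rightarrow> 'm \<Rightarrow> 'm \<Rightarrow> real) \<Rightarrow> real^'m \<Rightarrow> 'm \<Rightarrow> 'm \<Rightarrow> 'm \<Rightarrow> real" where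
  "christoffel gb p a b c = (1/2) * (\<Sum>d\<in>UNIV. ginv gb p a d *
      (pd (\<lambda>q. gb q d c) b p + pd (\<lambda>q. gb q d b) c p - pd (\<lambda>q. gb q b c) d p))"

definition covd :: "(real^'m \<Rightarrow> 'm \<Rightarrow> 'm \<Rightarrow> real) \<Rightarrow> (real^'m \<Rightarrow> real^'m) \<Rightarrow> (real^'m \<Rightarrow> real^'m) \<Rightarrow> real^'m \<Rightarrow> real^'m" where
  "covd gb Y X p = (\<chi> a. \<Sum>b\<in>UNIV. Y p $ b *
      (pd (\<lambda>q. X q $ a) b p + (\<Sum>c\<in>UNIV. christoffel gb p a b c * X p $ c)))"

definition unit_normal :: "'m \<Rightarrow> (real^'m \<Rightarrow> real) \<Rightarrow> real^'m \<Rightarrow> real^'m" where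
  "unit_normal t0 N p = (1 / N p) *\<^sub>R axis t0 1"

definition accel :: "'m \<Rightarrow> (real^'m \<Rightarrow> 'm \<Rightarrow> 'm \<Rightarrow> real) \<Rightarrow> (real^'m \<Rightarrow> real) \<Rightarrow> real^'m \<Rightarrow> real^'m" where
  "accel t0 gb N = covd gb (unit_normal t0 N) (unit_normal t0 N)"

definition sff :: "'m \<Rightarrow> (real^'m \<Rightarrow> 'm \<Rightarrow> 'm \<Rightarrow> real) \<Rightarrow> (real^'m \<Rightarrow> real) \<Rightarrow> real^'m \<Rightarrow> 'm \<Rightarrow> 'm \<Rightarrow> real" where
  "sff t0 gb N p i j = gprod gb p (covd gb (\<lambda>_. axis i 1) (unit_normal t0 N) p) (axis j 1)"

definition lie_metric :: "(real^'m \<Rightarrow> 'm \<Rightarrow> 'm \<Rightarrow> real) \<Rightarrow> (real^'m \<Rightarrow> real^'m) \<Rightarrow> real^'m \<Rightarrow> 'm \<Rightarrow> 'm \<Rightarrow> real" where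
  "lie_metric gb V p a b = (\<Sum>c\<in>UNIV. V p $ c * pd (\<lambda>q. gb q a b) c p
      + gb p c b * pd (\<lambda>q. V q $ c) a p + gb p a c * pd (\<lambda>q. V q $ c) b p)"

definition vf_apply :: "(real^'m \<Rightarrow> real^'m) \<Rightarrow> (real^'m \<Rightarrow> real) \<Rightarrow> real^'m \<Rightarrow> real" where
  "vf_apply V f p = (\<Sum>c\<in>UNIV. V p $ c * pd f c p)"

text \<open>Umbilically synchronized space-time: ds^2 = -N^2 dt^2 + g_ij dx^i dx^j
 (zero shift), N > 0, g_ij Riemannian, every slice t = const totally umbilical.\<close>
definition umb_sync :: "(real^'m) set \<Rightarrow> 'm \<Rightarrow> (real^'m \<Rightarrow> 'm \<Rightarrow> 'm \<Rightarrow> real) \<Rightarrow> (real^'m \<Rightarrow> real) \<Rightarrow> bool" where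
  "umb_sync U t0 gb N \<longleftrightarrow>
     open U \<and> smooth_on U N \<and> (\<forall>a b. smooth_on U (\<lambda>p. gb p a b)) \<and>
     (\<forall>p\<in>U. N p > 0 \<and> gb p t0 t0 = - ((N p) ^ 2) \<and>
        (\<forall>i. i \<noteq> t0 \<longrightarrow> gb p t0 i = 0 \<and> gb p i t0 = 0) \<and>
        (\<forall>a b. gb p a b = gb p b a) \<and>
        (\<forall>v. v $ t0 = 0 \<and> v \<noteq> 0 \<longrightarrow> gprod gb p v v > 0)) \<and>
     (\<exists>\<tau>. \<forall>p\<in>U. \<forall>i j. i \<noteq> t0 \<longrightarrow> j \<noteq> t0 \<longrightarrow> sff t0 gb N p i j = \<tau> p * gb p i j)"

definition conformal_vf :: "(real^'m) set \<Rightarrow> (real^'m \<Rightarrow> 'm \<Rightarrow> 'm \<Rightarrow> real) \<Rightarrow> (real^'m \<Rightarrow> real^'m) \<Rightarrow> bool" where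
  "conformal_vf U gb V \<longleftrightarrow> (\<forall>c. smooth_on U (\<lambda>p. V p $ c)) \<and>
     (\<exists>\<psi>. smooth_on U \<psi> \<and> (\<forall>p\<in>U. \<forall>a b. lie_metric gb V p a b = 2 * \<psi> p * gb p a b))"

definition killing_vf :: "(real^'m) set \<Rightarrow> (real^'m \<Rightarrow> 'm \<Rightarrow> 'm \<Rightarrow> real) \<Rightarrow> (real^'m \<Rightarrow> real^'m) \<Rightarrow> bool" where
  "killing_vf U gb V \<longleftrightarrow> (\<forall>c. smooth_on U (\<lambda>p. V p $ c)) \<and>
     (\<forall>p\<in>U. \<forall>a b. lie_metric gb V p a b = 0)"

end

theory Submission imports Defs begin

text \<open>Because \<open>V\<close> is tangential and the shift vanishes, the normal-normal component of
 \<open>\<pounds>\<^sub>V g\<close> reduces to \<open>V(g\<^sub>t\<^sub>t) = V(-N\<^sup>2) = -2N V(N)\<close>, while conformality makes it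
 \<open>2\<psi> g\<^sub>t\<^sub>t = -2\<psi>N\<^sup>2\<close>. Hence the conformal factor is \<open>\<psi> = V(N)/N\<close>, and \<open>V\<close> is Killing iff
 \<open>V(N) = 0\<close>. On the other hand the spatial components of the lowered acceleration are
 \<open>\<partial>\<^sub>iN/N\<close>, so also \<open>g(V, A) = V(N)/N\<close>.\<close>

lemma pd_eq_derivative_on_open:
  assumes "open U" "p \<in> U" "\<And>q. q \<in> U \<Longrightarrow> g q = f q" "(g has_derivative g') (at p)"
  shows "pd f k p = g' (axis k 1)"
proof -
  have "(f has_derivative g') (at p)"
    using has_derivative_transform_within_open[OF assms(4) assms(1) assms(2)] assms(3) by blast
  then show ?thesis unfolding pd_def using frechet_derivative_at by metis
qed

lemma pd_eq_zero_on_open: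
  assumes "open U" "p \<in> U" "\<And>q. q \<in> U \<Longrightarrow> f q = 0"
  shows "pd f k p = 0"
  using pd_eq_derivative_on_open[OF assms(1,2), of "\<lambda>_. 0" f "\<lambda>_. 0"] assms(3)
  by (simp add: has_derivative_const)

lemma sum_UNIV_eq_single:
  fixes f :: "'a::finite \<Rightarrow> 'b::comm_monoid_add"
  assumes "\<And>c. c \<noteq> a \<Longrightarrow> f c = 0"
  shows "sum f UNIV = f a"
  using sum.mono_neutral_right[of UNIV "{a}" f] assms by auto

lemma matrix_inv_right:
  fixes A :: "'a::semiring_1^'n^'n"
  assumes "invertible A"
  shows "A ** matrix_inv A = mat 1"
  using assms unfolding invertible_def matrix_inv_def
  by (rule someI_ex[where P = "\<lambda>A'. A ** A' = mat 1 \<and> A' ** A = mat 1", THEN conjunct1])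

lemma christoffel_lowered:
  assumes "invertible (\<chi> i j. gb p i j)"
  shows "(\<Sum>b\<in>UNIV. gb p a b * christoffel gb p b c d) =
    (pd (\<lambda>q. gb q a d) c p + pd (\<lambda>q. gb q a c) d p - pd (\<lambda>q. gb q c d) a p) / 2"
proof -
  define X where "X e = pd (\<lambda>q. gb q e d) c p + pd (\<lambda>q. gb q e c) d p - pd (\<lambda>q. gb q c d) e p" for e
  have inv: "(\<Sum>b\<in>UNIV. gb p a b * ginv gb p b e) = (if a = e then 1 else 0)" for e
    using matrix_inv_right[OF assms, THEN arg_cong, of "\<lambda>M. M $ a $ e"]
    by (simp add: ginv_def matrix_matrix_mult_def mat_def)
  have "(\<Sum>b\<in>UNIV. gb p a b * christoffel gb p b c d)
      = (1/2) * (\<Sum>b\<in>UNIV. \<Sum>e\<in>UNIV. gb p a b * ginv gb p b e * X e)"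
    unfolding christoffel_def X_def by (simp add: sum_distrib_left algebra_simps)
  also have "\<dots> = (1/2) * (\<Sum>e\<in>UNIV. (\<Sum>b\<in>UNIV. gb p a b * ginv gb p b e) * X e)"
    by (subst sum.swap) (simp add: sum_distrib_right)
  also have "\<dots> = X a / 2"
    by (subst sum_UNIV_eq_single[where a = a]) (simp_all add: inv)
  finally show ?thesis unfolding X_def .
qed

lemma umb_sync_metric:
  assumes "umb_sync U t0 gb N" "p \<in> U"
  shows "N p > 0" and "gb p t0 t0 = - (N p)\<^sup>2"
    and "i \<noteq> t0 \<Longrightarrow> gb p t0 i = 0" and "i \<noteq> t0 \<Longrightarrow> gb p i t0 = 0"
    and "v $ t0 = 0 \<Longrightarrow> v \<noteq> 0 \<Longrightarrow> gprod gb p v v > 0"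
  using assms unfolding umb_sync_def by blast+

lemma umb_sync_metric_invertible:
  fixes gb :: "real^'m \<Rightarrow> 'm \<Rightarrow> 'm \<Rightarrow> real"
  assumes us: "umb_sync U t0 gb N" and p: "p \<in> U"
  shows "invertible (\<chi> i j. gb p i j)"
proof -
  define G :: "real^'m^'m" where "G = (\<chi> i j. gb p i j)"
  have Gv: "(G *v x) $ a = (\<Sum>b\<in>UNIV. gb p a b * x $ b)" for x a
    unfolding G_def by (simp add: matrix_vector_mult_def)
  have "x = 0" if Gx: "G *v x = 0" for x
  proof -
    have "(G *v x) $ t0 = gb p t0 t0 * x $ t0"
      unfolding Gv by (rule sum_UNIV_eq_single) (simp add: umb_sync_metric(3)[OF us p])
    then have xt: "x $ t0 = 0"
      using Gx umb_sync_metric(1,2)[OF us p] by simp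
    have "gprod gb p x x = (\<Sum>a\<in>UNIV. x $ a * (G *v x) $ a)"
      unfolding gprod_def Gv by (simp add: sum_distrib_left algebra_simps)
    also have "\<dots> = 0" using Gx by simp
    finally show "x = 0" using umb_sync_metric(5)[OF us p xt] by force
  qed
  then obtain B where "B ** G = mat 1" using matrix_left_invertible_ker by blast
  then show ?thesis unfolding G_def using invertible_left_inverse by blast
qed

lemma umb_sync_pd_metric_time_time:
  assumes us: "umb_sync U t0 gb N" and p: "p \<in> U"
  shows "pd (\<lambda>q. gb q t0 t0) c p = -2 * N p * pd N c p"
proof -
  have "N differentiable (at p)"
    using us p unfolding umb_sync_def smooth_on_def by (metis iter_pd.simps(1))
  then have DN: "(N has_derivative frechet_derivative N (at p)) (at p)"
    using frechet_derivative_works by blast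
  have "pd (\<lambda>q. gb q t0 t0) c p = - (N p * pd N c p + pd N c p * N p)"
    unfolding pd_def[of N]
    by (rule pd_eq_derivative_on_open[OF _ p _ has_derivative_minus[OF has_derivative_mult[OF DN DN]]])
      (use us in \<open>auto simp: umb_sync_def power2_eq_square\<close>)
  then show ?thesis by simp
qed

lemma umb_sync_lie_metric_time_time:
  assumes us: "umb_sync U t0 gb N" and p: "p \<in> U" and tangential: "\<forall>q\<in>U. V q $ t0 = 0"
  shows "lie_metric gb V p t0 t0 = -2 * N p * vf_apply V N p"
proof -
  have "pd (\<lambda>q. V q $ t0) t0 p = 0"
    using pd_eq_zero_on_open[of U p] us p tangential by (simp add: umb_sync_def)
  then have "V p $ c * pd (\<lambda>q. gb q t0 t0) c p + gb p c t0 * pd (\<lambda>q. V q $ c) t0 p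
      + gb p t0 c * pd (\<lambda>q. V q $ c) t0 p = V p $ c * (-2 * N p * pd N c p)" for c
    using umb_sync_metric(3,4)[OF us p]
    by (cases "c = t0") (auto simp: umb_sync_pd_metric_time_time[OF us p])
  then have "lie_metric gb V p t0 t0 = (\<Sum>c\<in>UNIV. V p $ c * (-2 * N p * pd N c p))"
    unfolding lie_metric_def by simp
  also have "\<dots> = -2 * N p * vf_apply V N p"
    unfolding vf_apply_def by (simp add: sum_distrib_left algebra_simps)
  finally show ?thesis .
qed

lemma umb_sync_conformal_factor:
  assumes us: "umb_sync U t0 gb N" and p: "p \<in> U" and tangential: "\<forall>q\<in>U. V q $ t0 = 0"
    and conformal: "lie_metric gb V p t0 t0 = 2 * \<psi> * gb p t0 t0"
  shows "\<psi> = vf_apply V N p / N p"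
  using conformal umb_sync_lie_metric_time_time[OF us p tangential] umb_sync_metric(1,2)[OF us p]
  by (simp add: field_simps power2_eq_square)

text \<open>Only the Christoffel term survives: the normal \<open>n\<close> has no spatial components at all.\<close>
lemma accel_spatial_component:
  assumes "b \<noteq> t0"
  shows "accel t0 gb N p $ b = christoffel gb p b t0 t0 / (N p)\<^sup>2"
proof -
  define n where "n = unit_normal t0 N"
  have n: "n q $ e = (if e = t0 then 1 / N q else 0)" for q e
    unfolding n_def unit_normal_def axis_def by simp
  have "pd (\<lambda>q. n q $ b) t0 p = 0"
    using pd_eq_zero_on_open[of UNIV p "\<lambda>q. n q $ b"] assms by (simp add: n)
  moreover have "accel t0 gb N p $ b = (\<Sum>e\<in>UNIV. n p $ e *
      (pd (\<lambda>q. n q $ b) e p + (\<Sum>c\<in>UNIV. christoffel gb p b e c * n p $ c)))"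
    unfolding accel_def covd_def n_def by simp
  moreover have "\<dots> = n p $ t0 *
      (pd (\<lambda>q. n q $ b) t0 p + (\<Sum>c\<in>UNIV. christoffel gb p b t0 c * n p $ c))"
    by (rule sum_UNIV_eq_single) (simp add: n)
  moreover have "(\<Sum>c\<in>UNIV. christoffel gb p b t0 c * n p $ c) = christoffel gb p b t0 t0 * n p $ t0"
    by (rule sum_UNIV_eq_single) (simp add: n)
  ultimately show ?thesis by (simp add: n power2_eq_square)
qed

lemma umb_sync_accel_lowered:
  assumes us: "umb_sync U t0 gb N" and p: "p \<in> U" and "a \<noteq> t0"
  shows "(\<Sum>b\<in>UNIV. gb p a b * accel t0 gb N p $ b) = pd N a p / N p"
proof -
  have "(\<Sum>b\<in>UNIV. gb p a b * accel t0 gb N p $ b)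
      = (\<Sum>b\<in>UNIV. gb p a b * christoffel gb p b t0 t0) / (N p)\<^sup>2"
    unfolding sum_divide_distrib using umb_sync_metric(4)[OF us p \<open>a \<noteq> t0\<close>]
    by (intro sum.cong refl) (metis accel_spatial_component mult_zero_left times_divide_eq_right)
  also have "\<dots> = (- pd (\<lambda>q. gb q t0 t0) a p / 2) / (N p)\<^sup>2"
  proof -
    have "open U" using us unfolding umb_sync_def by blast
    then have "pd (\<lambda>q. gb q a t0) t0 p = 0"
      using pd_eq_zero_on_open[of U p "\<lambda>q. gb q a t0"] umb_sync_metric(4)[OF us _ \<open>a \<noteq> t0\<close>] p
      by simp
    then show ?thesis
      by (simp add: christoffel_lowered[where gb = gb and p = p, OF umb_sync_metric_invertible[OF us p]])
  qed
  also have "\<dots> = pd N a p / N p"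
    using umb_sync_metric(1)[OF us p]
    by (simp add: umb_sync_pd_metric_time_time[OF us p] power2_eq_square)
  finally show ?thesis .
qed

lemma umb_sync_gprod_accel:
  assumes us: "umb_sync U t0 gb N" and p: "p \<in> U" and tangential: "\<forall>q\<in>U. V q $ t0 = 0"
  shows "gprod gb p (V p) (accel t0 gb N p) = vf_apply V N p / N p"
proof -
  have "gprod gb p (V p) (accel t0 gb N p)
      = (\<Sum>a\<in>UNIV. V p $ a * (\<Sum>b\<in>UNIV. gb p a b * accel t0 gb N p $ b))"
    unfolding gprod_def by (simp add: sum_distrib_left algebra_simps)
  also have "\<dots> = (\<Sum>a\<in>UNIV. V p $ a * pd N a p / N p)"
    using tangential p umb_sync_accel_lowered[OF us p]
    by (intro sum.cong refl) (metis mult_zero_left times_divide_eq_right)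
  also have "\<dots> = vf_apply V N p / N p"
    unfolding vf_apply_def by (simp add: sum_divide_distrib)
  finally show ?thesis .
qed

theorem theorem4:
  fixes U :: "(real^'m) set" and t0 :: 'm
    and gb :: "real^'m \<Rightarrow> 'm \<Rightarrow> 'm \<Rightarrow> real" and N :: "real^'m \<Rightarrow> real"
    and V :: "real^'m \<Rightarrow> real^'m"
  assumes "CARD('m) \<ge> 2"
    and "umb_sync U t0 gb N"
    and "conformal_vf U gb V"
    and "\<forall>p\<in>U. V p $ t0 = 0"
  shows "(killing_vf U gb V \<longleftrightarrow> (\<forall>p\<in>U. vf_apply V N p = 0)) \<and>
         ((\<forall>p\<in>U. vf_apply V N p = 0) \<longleftrightarrow> (\<forall>p\<in>U. gprod gb p (V p) (accel t0 gb N p) = 0))"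
proof -
  obtain \<psi> where smooth: "\<forall>c. smooth_on U (\<lambda>p. V p $ c)"
    and \<psi>: "\<forall>p\<in>U. \<forall>a b. lie_metric gb V p a b = 2 * \<psi> p * gb p a b"
    using assms(3) unfolding conformal_vf_def by blast
  have \<psi>_eq: "\<psi> p = vf_apply V N p / N p" if "p \<in> U" for p
    using umb_sync_conformal_factor[OF assms(2) that assms(4)] \<psi> that by blast
  have N_pos: "N p > 0" if "p \<in> U" for p
    using umb_sync_metric(1)[OF assms(2) that] .
  have "killing_vf U gb V \<longleftrightarrow> (\<forall>p\<in>U. \<psi> p = 0)"
    using smooth \<psi> umb_sync_metric(1,2)[OF assms(2)] unfolding killing_vf_def
    by (metis mult_eq_0_iff neg_equal_0_iff_equal power_not_zero less_irrefl zero_neq_numeral)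
  moreover have "(\<forall>p\<in>U. \<psi> p = 0) \<longleftrightarrow> (\<forall>p\<in>U. vf_apply V N p = 0)"
    using \<psi>_eq N_pos by force
  moreover have "gprod gb p (V p) (accel t0 gb N p) = \<psi> p" if "p \<in> U" for p
    using umb_sync_gprod_accel[OF assms(2) that assms(4)] \<psi>_eq[OF that] by simp
  ultimately show ?thesis by simp
qed

end
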